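(* Let $p>1$, fix a choice of sign $\pm$, and let $f\in C_0^2(\mathbb{R})$, $g\in C_0^1(\mathbb{R})$ satisfy $\pm f'(x_0)+g(x_0)\neq0$ for some $x_0\in\mathbb{R}$ (same sign as in the equation below). Consider \[ \begin{cases} u_{tt}-u_{xx}=|u_t\pm u_x|^{p-1}(u_t\pm u_x) & \text{in } \mathbb{R}\times(0,T),\\ u(x,0)=\varepsilon f(x),\quad u_t(x,0)=\varepsilon g(x), & x\in\mathbb{R}, \end{cases} \] with $\varepsilon>0$. Then there exists a constant $C>0$ independent of $\varepsilon$ (one may take $C=|\pm f'(x_0)+g(x_0)|^{1-p}/(p-1)$) such that for every $\varepsilon>0$, no classical solution on $\mathbb{R}\times[0,T]$ exists if $T>C\varepsilon^{-(p-1)}$. Consequently the lifespan satisfies $T(\varepsilon)\le C\varepsilon^{-(p-1)}$.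
   Context: The lifespan $T(\varepsilon)$ is the supremum of all $T>0$ such that a classical solution of the problem exists on $\mathbb{R}\times[0,T]$ for the fixed data $(f,g)$. *)

theory Defs
  imports "HOL-Analysis.Analysis"
begin

definition compact_support :: "(real \<Rightarrow> real) \<Rightarrow> bool" where
  "compact_support h \<longleftrightarrow> compact (closure {x. h x \<noteq> 0})"

definition C0_1 :: "(real \<Rightarrow> real) \<Rightarrow> bool" where
  "C0_1 h \<longleftrightarrow> (\<forall>x. h differentiable (at x)) \<and> continuous_on UNIV (deriv h)
      \<and> compact_support h"

definition C0_2 :: "(real \<Rightarrow> real) \<Rightarrow> bool" where
  "C0_2 h \<longleftrightarrow> (\<forall>x. h differentiable (at x)) \<and> (\<forall>x. deriv h differentiable (at x))
      \<and> continuous_on UNIV (deriv (deriv h)) \<and> compact_support h"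

definition classical_solution ::
  "real \<Rightarrow> real \<Rightarrow> (real \<Rightarrow> real) \<Rightarrow> (real \<Rightarrow> real) \<Rightarrow> real \<Rightarrow> real
     \<Rightarrow> (real \<Rightarrow> real \<Rightarrow> real) \<Rightarrow> bool" where
  "classical_solution p s f g \<epsilon> T u \<longleftrightarrow> T > 0 \<and>
    (\<exists>ux ut uxx uxt utt :: real \<Rightarrow> real \<Rightarrow> real.
      (\<forall>v \<in> {u, ux, ut, uxx, uxt, utt}. continuous_on (UNIV \<times> {0..T}) (\<lambda>(x, t). v x t)) \<and>
      (\<forall>x. \<forall>t \<in> {0..T}.
         ((\<lambda>y. u y t) has_real_derivative ux x t) (at x) \<and>
         ((\<lambda>\<tau>. u x \<tau>) has_real_derivative ut x t) (at t within {0..T}) \<and>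
         ((\<lambda>y. ux y t) has_real_derivative uxx x t) (at x) \<and>
         ((\<lambda>y. ut y t) has_real_derivative uxt x t) (at x) \<and>
         ((\<lambda>\<tau>. ux x \<tau>) has_real_derivative uxt x t) (at t within {0..T}) \<and>
         ((\<lambda>\<tau>. ut x \<tau>) has_real_derivative utt x t) (at t within {0..T})) \<and>
      (\<forall>x. \<forall>t \<in> {0<..<T}.
         utt x t - uxx x t = \<bar>ut x t + s * ux x t\<bar> powr (p - 1) * (ut x t + s * ux x t)) \<and>
      (\<forall>x. u x 0 = \<epsilon> * f x \<and> ut x 0 = \<epsilon> * g x))"

end

theory Submission imports Defs begin

text \<open>Along the backward characteristic x = x0 - s t the quantity
  W(t) = (u_t + s u_x)(x0 - s t, t) satisfies W' = u_tt - u_xx, because s^2 = 1. Hence W solves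
  the scalar ODE W' = |W|^(p-1) W with W(0) = \<epsilon> (s f'(x0) + g(x0)) \<noteq> 0. While W > 0 the
  quantity W^(1-p) + (p - 1) t is conserved, so W blows up before time W(0)^(1-p) / (p - 1),
  which is of order \<epsilon>^(-(p-1)).\<close>

lemma has_real_derivative_along_line:
  fixes v vx vt :: "real \<Rightarrow> real \<Rightarrow> real"
  assumes cont: "continuous_on (UNIV \<times> {0..T}) (\<lambda>(x,t). vt x t)"
    and dx: "\<forall>x. \<forall>t\<in>{0..T}. ((\<lambda>y. v y t) has_real_derivative vx x t) (at x)"
    and dt: "\<forall>x. \<forall>t\<in>{0..T}. ((\<lambda>\<tau>. v x \<tau>) has_real_derivative vt x t) (at t within {0..T})"
    and t: "t \<in> {0..T}"
  shows "((\<lambda>\<tau>. v (a + b*\<tau>) \<tau>) has_real_derivative (vt (a + b*t) t + b * vx (a + b*t) t))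
           (at t within {0..T})"
proof -
  define x where "x = a + b*t"
  define D where "D = (\<lambda>(hx, ht). hx * vx x t + blinfun_mult_left (vt x t) ht)"
  have "((\<lambda>(x,y). v x y) has_derivative D) (at (x,t) within UNIV \<times> {0..T})"
    unfolding D_def
  proof (rule has_derivative_partialsI)
    show "((\<lambda>y. v y t) has_derivative (\<lambda>h. h * vx x t)) (at x within UNIV)"
      using dx t by (simp add: has_real_derivative_iff_has_vector_derivative has_vector_derivative_def mult.commute)
    show "\<And>x y. y \<in> {0..T} \<Longrightarrow>
            ((\<lambda>y. v x y) has_derivative blinfun_apply (blinfun_mult_left (vt x y))) (at y within {0..T})"
      using dt by (simp add: has_field_derivative_def mult_commute_abs)
    have "continuous_on (UNIV \<times> {0..T}) (\<lambda>(x, y). blinfun_mult_left (vt x y))"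
      using continuous_on_compose[OF cont, of blinfun_mult_left]
      by (simp add: split_beta' o_def continuous_on_id
          bounded_linear.continuous_on[OF bounded_linear_blinfun_mult_left])
    then show "continuous (at (x, t) within UNIV \<times> {0..T}) (\<lambda>(x, y). blinfun_mult_left (vt x y))"
      using t by (simp add: continuous_on_eq_continuous_within)
  qed (use t in auto)
  then have "((\<lambda>(x,y). v x y) has_derivative D) (at (x,t) within (\<lambda>\<tau>. (a + b*\<tau>, \<tau>)) ` {0..T})"
    by (rule has_derivative_subset) auto
  moreover have "((\<lambda>\<tau>. (a + b*\<tau>, \<tau>)) has_derivative (\<lambda>h. (b*h, h))) (at t within {0..T})"
    by (auto intro!: derivative_eq_intros)
  ultimately have "((\<lambda>\<tau>. v (a + b*\<tau>) \<tau>) has_derivative D \<circ> (\<lambda>h. (b*h, h))) (at t within {0..T})"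
    using diff_chain_within by (fastforce simp: x_def o_def)
  moreover have "D \<circ> (\<lambda>h. (b*h, h)) = (*) (vt x t + b * vx x t)"
    by (auto simp: D_def algebra_simps)
  ultimately show ?thesis
    by (simp add: has_field_derivative_def x_def)
qed

lemma power_ode_solution_stays_positive:
  fixes W :: "real \<Rightarrow> real"
  assumes contW: "continuous_on {0..T} W"
    and der: "\<And>t. t \<in> {0<..<T} \<Longrightarrow> (W has_real_derivative (\<bar>W t\<bar> powr q * W t)) (at t)"
    and W0: "W 0 > 0" and t: "t \<in> {0..T}"
  shows "W t > 0"
proof (rule ccontr)
  assume "\<not> W t > 0"
  define K where "K = {t \<in> {0..T}. W t \<le> 0}"
  have "closed K"
    using continuous_closed_preimage[OF contW closed_atLeastAtMost, of "{..0}"]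
    by (simp add: K_def vimage_def Int_def conj_commute)
  moreover have "bounded K"
    by (rule bounded_subset[of "{0..T}"]) (auto simp: K_def)
  moreover have "t \<in> K" using t \<open>\<not> W t > 0\<close> by (simp add: K_def)
  ultimately obtain t1 where t1: "t1 \<in> K" and least: "\<And>y. y \<in> K \<Longrightarrow> t1 \<le> y"
    using compact_attains_inf[of K] by (auto simp: compact_eq_bounded_closed)
  have t1T: "0 \<le> t1" "t1 \<le> T" "W t1 \<le> 0" using t1 by (auto simp: K_def)
  with W0 have t1_pos: "0 < t1" by (cases "t1 = 0") auto
  \<comment> \<open>By minimality of \<open>t\<^sub>1\<close>, \<open>W > 0\<close> on \<open>[0, t\<^sub>1)\<close>, so \<open>W\<close> increases there.\<close>
  have "continuous_on {0..t1} W" using t1T by (intro continuous_on_subset[OF contW]) auto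
  moreover have "W differentiable (at y)" if "0 < y" "y < t1" for y
    using der[of y] that t1T real_differentiable_def by force
  ultimately obtain l z where z: "0 < z" "z < t1" "(W has_real_derivative l) (at z)"
    and mvt: "W t1 - W 0 = (t1 - 0) * l"
    using MVT[OF t1_pos] by blast
  have "l = \<bar>W z\<bar> powr q * W z"
    using der[of z] z t1T DERIV_unique by force
  moreover have "W z > 0"
    using least[of z] z t1T by (force simp: K_def)
  ultimately have "l > 0" by simp
  with mvt t1_pos W0 t1T show False
    by (smt (verit) mult_pos_pos)
qed

lemma power_ode_blowup_time:
  fixes W :: "real \<Rightarrow> real"
  assumes p: "p > 1" and T: "T > 0" and contW: "continuous_on {0..T} W"
    and der: "\<And>t. t \<in> {0<..<T} \<Longrightarrow> (W has_real_derivative (\<bar>W t\<bar> powr (p-1) * W t)) (at t)"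
    and W0: "W 0 > 0"
  shows "(p-1) * T < W 0 powr (1-p)"
proof -
  have pos: "W t > 0" if "t \<in> {0..T}" for t
    by (rule power_ode_solution_stays_positive[OF contW der W0 that])
  define G where "G t = W t powr (1-p) + (p-1)*t" for t
  have "G T = G 0"
  proof (rule DERIV_isconst_end[OF T])
    show "continuous_on {0..T} G"
      unfolding G_def using pos by (auto intro!: continuous_intros contW simp: less_imp_neq dest: sym)
  next
    fix x assume x: "0 < x" "x < T"
    have Wx: "W x > 0" using pos x by simp
    have "(G has_real_derivative
            ((1-p) * W x powr (1-p-1) * (\<bar>W x\<bar> powr (p-1) * W x) + (p-1))) (at x)"
      unfolding G_def using x
      DERIV_add[OF DERIV_fun_powr[OF der Wx] DERIV_cmult[OF DERIV_ident, of "p-1"], of "1-p"]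
      by simp
    moreover have "W x powr (1-p-1) * (\<bar>W x\<bar> powr (p-1) * W x) = W x powr ((1-p-1) + (p-1) + 1)"
      using Wx by (simp only: powr_add abs_of_pos powr_one)
    ultimately show "(G has_real_derivative 0) (at x)"
      using Wx by (simp add: algebra_simps)
  qed
  moreover have "W T powr (1-p) > 0" using pos[of T] T by simp
  ultimately show ?thesis unfolding G_def by linarith
qed

text \<open>The nonlinearity is odd, so \<open>-W\<close> solves the same equation and the sign of \<open>W(0)\<close>
  is irrelevant.\<close>

lemma power_ode_blowup_time_abs:
  fixes W :: "real \<Rightarrow> real"
  assumes p: "p > 1" and T: "T > 0" and contW: "continuous_on {0..T} W"
    and der: "\<And>t. t \<in> {0<..<T} \<Longrightarrow> (W has_real_derivative (\<bar>W t\<bar> powr (p-1) * W t)) (at t)"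
    and W0: "W 0 \<noteq> 0"
  shows "(p-1) * T < \<bar>W 0\<bar> powr (1-p)"
proof -
  define V where "V t = sgn (W 0) * W t" for t
  have "sgn (W 0) = 1 \<or> sgn (W 0) = -1" using W0 by (auto simp: sgn_if)
  then have abs_V: "\<bar>V t\<bar> = \<bar>W t\<bar>" for t by (auto simp: V_def)
  have "continuous_on {0..T} V" unfolding V_def by (intro continuous_intros contW)
  moreover have "(V has_real_derivative (\<bar>V t\<bar> powr (p-1) * V t)) (at t)" if "t \<in> {0<..<T}" for t
    using DERIV_cmult[OF der[OF that], of "sgn (W 0)"] abs_V[of t]
    unfolding V_def by (simp add: algebra_simps)
  moreover have "V 0 = \<bar>W 0\<bar>" by (simp add: V_def sgn_if)
  ultimately show ?thesis
    using power_ode_blowup_time[OF p T] W0 by force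
qed

lemma classical_solution_characteristic_ode:
  assumes sol: "classical_solution p s f g \<epsilon> T u"
    and s: "s = 1 \<or> s = -1"
    and f: "f differentiable (at x0)"
  obtains W where "continuous_on {0..T} W"
    and "\<And>t. t \<in> {0<..<T} \<Longrightarrow> (W has_real_derivative (\<bar>W t\<bar> powr (p-1) * W t)) (at t)"
    and "W 0 = \<epsilon> * (s * deriv f x0 + g x0)"
proof -
  obtain ux ut uxx uxt utt where T: "T > 0"
    and cont: "\<forall>v \<in> {u, ux, ut, uxx, uxt, utt}. continuous_on (UNIV \<times> {0..T}) (\<lambda>(x, t). v x t)"
    and D: "\<forall>x. \<forall>t \<in> {0..T}.
         ((\<lambda>y. u y t) has_real_derivative ux x t) (at x) \<and>
         ((\<lambda>\<tau>. u x \<tau>) has_real_derivative ut x t) (at t within {0..T}) \<and>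
         ((\<lambda>y. ux y t) has_real_derivative uxx x t) (at x) \<and>
         ((\<lambda>y. ut y t) has_real_derivative uxt x t) (at x) \<and>
         ((\<lambda>\<tau>. ux x \<tau>) has_real_derivative uxt x t) (at t within {0..T}) \<and>
         ((\<lambda>\<tau>. ut x \<tau>) has_real_derivative utt x t) (at t within {0..T})"
    and E: "\<forall>x. \<forall>t \<in> {0<..<T}.
         utt x t - uxx x t = \<bar>ut x t + s * ux x t\<bar> powr (p - 1) * (ut x t + s * ux x t)"
    and I: "\<forall>x. u x 0 = \<epsilon> * f x \<and> ut x 0 = \<epsilon> * g x"
    using sol unfolding classical_solution_def by blast
  define W where "W \<tau> = ut (x0 - s*\<tau>) \<tau> + s * ux (x0 - s*\<tau>) \<tau>" for \<tau>
  have line: "continuous_on {0..T} (\<lambda>\<tau>::real. (x0 - s*\<tau>, \<tau>))"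
    and line_image: "(\<lambda>\<tau>. (x0 - s*\<tau>, \<tau>)) ` {0..T} \<subseteq> UNIV \<times> {0..T}"
    by (auto intro!: continuous_intros)
  have "continuous_on {0..T} (\<lambda>\<tau>. v (x0 - s*\<tau>) \<tau>)" if "v \<in> {ut, ux}" for v
    using continuous_on_compose2[OF _ line line_image, of "\<lambda>(x, t). v x t"] cont that by auto
  then have "continuous_on {0..T} W"
    unfolding W_def by (intro continuous_intros) auto
  moreover have "(W has_real_derivative (\<bar>W t\<bar> powr (p-1) * W t)) (at t)" if t: "t \<in> {0<..<T}" for t
  proof -
    have "t \<in> {0..T}" using t by auto
    then have "(W has_real_derivative
        (utt (x0 - s*t) t - s * uxt (x0 - s*t) t) + s * (uxt (x0 - s*t) t - s * uxx (x0 - s*t) t))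
        (at t within {0..T})"
      unfolding W_def using cont D
      by (intro DERIV_add DERIV_cmult has_real_derivative_along_line[where b = "-s", simplified])
         auto
    moreover have "at t within {0..T} = at t" using t by (intro at_within_Icc_at) auto
    moreover have "(utt (x0 - s*t) t - s * uxt (x0 - s*t) t) + s * (uxt (x0 - s*t) t - s * uxx (x0 - s*t) t)
        = utt (x0 - s*t) t - uxx (x0 - s*t) t"
      using s by (auto simp: algebra_simps)
    ultimately show ?thesis
      using E t by (simp add: W_def)
  qed
  moreover have "W 0 = \<epsilon> * (s * deriv f x0 + g x0)"
  proof -
    have "(f has_real_derivative deriv f x0) (at x0)"
      using f by (simp add: DERIV_deriv_iff_real_differentiable)
    from DERIV_cmult[OF this, of \<epsilon>]
    have "((\<lambda>y. u y 0) has_real_derivative \<epsilon> * deriv f x0) (at x0)"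
      using I by simp
    moreover have "((\<lambda>y. u y 0) has_real_derivative ux x0 0) (at x0)" using D T by auto
    ultimately have "ux x0 0 = \<epsilon> * deriv f x0" using DERIV_unique by blast
    then show ?thesis using I by (simp add: W_def algebra_simps)
  qed
  ultimately show thesis using that by blast
qed

lemma classical_solution_lifespan_bound:
  assumes sol: "classical_solution p s f g \<epsilon> T u"
    and p: "p > 1" and s: "s = 1 \<or> s = -1" and f: "f differentiable (at x0)"
    and e: "\<epsilon> > 0" and c: "s * deriv f x0 + g x0 \<noteq> 0"
  shows "(p-1) * T < \<epsilon> powr (1-p) * \<bar>s * deriv f x0 + g x0\<bar> powr (1-p)"
proof -
  obtain W where contW: "continuous_on {0..T} W"
    and der: "\<And>t. t \<in> {0<..<T} \<Longrightarrow> (W has_real_derivative (\<bar>W t\<bar> powr (p-1) * W t)) (at t)"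
    and W0: "W 0 = \<epsilon> * (s * deriv f x0 + g x0)"
    using classical_solution_characteristic_ode[OF sol s f] by blast
  have "T > 0" using sol by (simp add: classical_solution_def)
  moreover have "W 0 \<noteq> 0" using W0 e c by simp
  ultimately have "(p-1) * T < \<bar>W 0\<bar> powr (1-p)"
    using power_ode_blowup_time_abs[OF p _ contW der] by blast
  with W0 e show ?thesis by (simp add: abs_mult powr_mult)
qed

theorem theorem4p1:
  fixes p s :: real and f g :: "real \<Rightarrow> real" and x0 :: real
  assumes "p > 1"
    and "s = 1 \<or> s = -1"
    and "C0_2 f" and "C0_1 g"
    and "s * deriv f x0 + g x0 \<noteq> 0"
  shows "\<exists>C > 0. \<forall>\<epsilon> > 0. \<forall>T. T > C * \<epsilon> powr (-(p - 1)) \<longrightarrow>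
           \<not> (\<exists>u. classical_solution p s f g \<epsilon> T u)"
proof (intro exI conjI allI impI notI)
  define c where "c = s * deriv f x0 + g x0"
  show "\<bar>c\<bar> powr (1-p) / (p-1) > 0" using assms(1,5) by (simp add: c_def)
  fix \<epsilon> T :: real
  assume e: "\<epsilon> > 0" and T: "T > \<bar>c\<bar> powr (1-p) / (p-1) * \<epsilon> powr (-(p - 1))"
  assume "\<exists>u. classical_solution p s f g \<epsilon> T u"
  then obtain u where "classical_solution p s f g \<epsilon> T u" by blast
  moreover have "f differentiable (at x0)" using assms(3) by (simp add: C0_2_def)
  ultimately have "(p-1) * T < \<epsilon> powr (1-p) * \<bar>c\<bar> powr (1-p)"
    using classical_solution_lifespan_bound assms(1,2,5) e unfolding c_def by blast
  with T assms(1) show False by (simp add: field_simps)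
qed

end
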